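(* For each $d,l\ge1$ there exist constants $0<\gamma<1$ and $M\ge1$ (depending only on $d$ and $l$) such that the following holds. Let $B\subset\mathbb{R}^d$ be a ball of radius $1$ and let $\mathbf p=(p_1,p_2):B\to\mathbb{R}^2$ be a polynomial map of degree at most $l$ with $$\sup_{x,y\in B}\|\mathbf p(x)-\mathbf p(y)\|\le2\qquad\text{and}\qquad\sup_{x\in B}\operatorname{dist}(\mathcal L,\mathbf p(x))\ge\tfrac18\ \text{for every straight line }\mathcal L\subset\mathbb{R}^2.$$ Then (a) $\sup_{x\in B}\|\tilde\nabla\mathbf p(x)\|\ge\gamma\big(1+\sup_{x\in B}\|\mathbf p(x)\|\big)$, and (b) $\sup_{x\in B,\ i=1,2}\|\nabla p_i(x)\|\le M$.
   Context: Norms are Euclidean. The skew-gradient of $\mathbf p=(p_1,p_2)$ is $\tilde\nabla\mathbf p(x)=p_1(x)\nabla p_2(x)-p_2(x)\nabla p_1(x)\in\mathbb{R}^d$. *)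

theory Defs
  imports "HOL-Analysis.Analysis"
begin

definition poly_fun_deg_le :: "nat \<Rightarrow> (real^'n \<Rightarrow> real) \<Rightarrow> bool" where
  "poly_fun_deg_le l f \<longleftrightarrow>
     (\<exists>c :: ('n \<Rightarrow> nat) \<Rightarrow> real.
        f = (\<lambda>x. \<Sum>\<alpha>\<in>{\<alpha>. sum \<alpha> UNIV \<le> l}. c \<alpha> * (\<Prod>i\<in>UNIV. (x$i) ^ (\<alpha> i))))"

definition grad :: "(real^'n \<Rightarrow> real) \<Rightarrow> real^'n \<Rightarrow> real^'n" where
  "grad f x = (\<chi> i. frechet_derivative f (at x) (axis i 1))"

definition skew_grad :: "(real^'n \<Rightarrow> real) \<Rightarrow> (real^'n \<Rightarrow> real) \<Rightarrow> real^'n \<Rightarrow> real^'n" where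
  "skew_grad p1 p2 x = p1 x *\<^sub>R grad p2 x - p2 x *\<^sub>R grad p1 x"

definition is_line :: "(real^2) set \<Rightarrow> bool" where
  "is_line L \<longleftrightarrow> (\<exists>a v. v \<noteq> 0 \<and> L = {a + t *\<^sub>R v | t. True})"

definition pmap :: "(real^'n \<Rightarrow> real) \<Rightarrow> (real^'n \<Rightarrow> real) \<Rightarrow> real^'n \<Rightarrow> real^2" where
  "pmap p1 p2 x = vector [p1 x, p2 x]"

end

theory Submission
  imports Defs
begin

text \<open>A compactness
  argument over representations of least coefficient norm, together with the identity theorem,
  shows that polynomials bounded on the unit ball have representations with uniformly bounded
  coefficients. Around the centre \<open>c\<close> an admissible pair is therefore \<open>p c + P (x - c)\<close> with
  the coefficients of \<open>P\<close> bounded, which gives the gradient bound (b).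

  For (a), dividing the skew gradient at \<open>c + y\<close> by \<open>D = 1 + \<bar>p1 c\<bar> + \<bar>p2 c\<bar>\<close> gives
  \<open>(u1 + w P1) \<nabla>P2 - (u2 + w P2) \<nabla>P1\<close> with \<open>\<bar>u1\<bar> + \<bar>u2\<bar> + \<bar>w\<bar> = 1\<close>. If this field could be
  uniformly small, a limit of such data would make it vanish on the ball. Then \<open>P1\<close> and \<open>P2\<close>
  satisfy a linear relation (for \<open>w \<noteq> 0\<close> because the quotient of the two components of
  \<open>u / w + P\<close> is locally constant, and the identity theorem spreads this to the whole ball), so
  the limit image lies on a line, and the images of the nearby admissible pairs would come
  closer than \<open>1/8\<close> to a line.\<close>

section \<open>Polynomial functions in coefficient form\<close>

definition exponents :: "nat \<Rightarrow> ('n::finite \<Rightarrow> nat) set" where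
  "exponents k = {\<alpha>. sum \<alpha> UNIV \<le> k}"

definition monomial :: "('n::finite \<Rightarrow> nat) \<Rightarrow> real^'n \<Rightarrow> real" where
  "monomial \<alpha> x = (\<Prod>i\<in>UNIV. (x$i) ^ \<alpha> i)"

definition mpoly :: "nat \<Rightarrow> (('n::finite \<Rightarrow> nat) \<Rightarrow> real) \<Rightarrow> real^'n \<Rightarrow> real" where
  "mpoly k c x = (\<Sum>\<alpha>\<in>exponents k. c \<alpha> * monomial \<alpha> x)"

lemma poly_fun_deg_le_iff_mpoly: "poly_fun_deg_le k f \<longleftrightarrow> (\<exists>c. f = mpoly k c)"
  unfolding poly_fun_deg_le_def mpoly_def exponents_def monomial_def by simp

lemma poly_fun_deg_le_mpoly: "poly_fun_deg_le k (mpoly k c)"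
  by (auto simp: poly_fun_deg_le_iff_mpoly)

lemma finite_exponents: "finite (exponents k :: ('n::finite \<Rightarrow> nat) set)"
proof (rule finite_subset)
  show "exponents k \<subseteq> PiE UNIV (\<lambda>_::'n. {..k})"
    unfolding exponents_def PiE_def extensional_def
    by (auto intro: order_trans[OF member_le_sum[where A=UNIV]])
qed (intro finite_PiE, auto)

lemma exponents_mono: "j \<le> k \<Longrightarrow> exponents j \<subseteq> exponents k"
  by (auto simp: exponents_def)

lemma mpoly_add: "mpoly k c x + mpoly k d x = mpoly k (\<lambda>\<alpha>. c \<alpha> + d \<alpha>) x"
  by (simp add: mpoly_def sum.distrib algebra_simps)

lemma mpoly_cmult: "a * mpoly k c x = mpoly k (\<lambda>\<alpha>. a * c \<alpha>) x"
  by (simp add: mpoly_def sum_distrib_left algebra_simps)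

lemma mpoly_single:
  assumes "\<alpha> \<in> exponents k"
  shows "mpoly k (\<lambda>\<beta>. if \<beta> = \<alpha> then t else 0) x = t * monomial \<alpha> x"
proof -
  have "mpoly k (\<lambda>\<beta>. if \<beta> = \<alpha> then t else 0) x
      = (\<Sum>\<beta>\<in>exponents k. if \<beta> = \<alpha> then t * monomial \<beta> x else 0)"
    unfolding mpoly_def by (rule sum.cong) auto
  then show ?thesis using assms by (simp add: finite_exponents)
qed

lemma poly_fun_deg_le_monomial:
  assumes "sum \<alpha> UNIV \<le> k"
  shows "poly_fun_deg_le k (\<lambda>y. t * monomial \<alpha> y)"
proof -
  have "(\<lambda>y. t * monomial \<alpha> y) = mpoly k (\<lambda>\<beta>. if \<beta> = \<alpha> then t else 0)"
    using assms by (intro ext mpoly_single[symmetric]) (simp add: exponents_def)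
  then show ?thesis by (auto simp: poly_fun_deg_le_iff_mpoly)
qed

lemma poly_fun_deg_le_const: "poly_fun_deg_le k (\<lambda>y. t)"
  using poly_fun_deg_le_monomial[of "\<lambda>_. 0" k t] by (simp add: monomial_def)

lemma poly_fun_deg_le_coord:
  fixes i :: "'n::finite"
  shows "poly_fun_deg_le 1 (\<lambda>y :: real^'n. y$i)"
proof -
  have "monomial (\<lambda>j. if j = i then 1 else 0) y = y$i" for y :: "real^'n"
    by (simp add: monomial_def if_distrib prod.If_cases)
  moreover have "sum (\<lambda>j. if j = i then 1 else 0) (UNIV :: 'n set) = 1"
    by simp
  ultimately show ?thesis
    using poly_fun_deg_le_monomial[of "\<lambda>j. if j = i then 1 else 0" 1 1] by simp
qed

lemma poly_fun_deg_le_add: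
  "poly_fun_deg_le k f \<Longrightarrow> poly_fun_deg_le k g \<Longrightarrow> poly_fun_deg_le k (\<lambda>y. f y + g y)"
  by (auto simp: poly_fun_deg_le_iff_mpoly mpoly_add)

lemma poly_fun_deg_le_cmult:
  "poly_fun_deg_le k f \<Longrightarrow> poly_fun_deg_le k (\<lambda>y. a * f y)"
  by (auto simp: poly_fun_deg_le_iff_mpoly mpoly_cmult)

lemma poly_fun_deg_le_mono:
  assumes "poly_fun_deg_le j f" "j \<le> k"
  shows "poly_fun_deg_le k f"
proof -
  obtain c where c: "f = mpoly j c"
    using assms(1) by (auto simp: poly_fun_deg_le_iff_mpoly)
  have "f = mpoly k (\<lambda>\<alpha>. if \<alpha> \<in> exponents j then c \<alpha> else 0)"
    unfolding c mpoly_def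
    by (intro ext sum.mono_neutral_cong_left finite_exponents exponents_mono assms(2)) auto
  then show ?thesis by (auto simp: poly_fun_deg_le_iff_mpoly)
qed

lemma poly_fun_deg_le_sum:
  "finite A \<Longrightarrow> (\<And>a. a \<in> A \<Longrightarrow> poly_fun_deg_le k (f a)) \<Longrightarrow>
    poly_fun_deg_le k (\<lambda>y. \<Sum>a\<in>A. f a y)"
  by (induction A rule: finite_induct) (auto intro: poly_fun_deg_le_const poly_fun_deg_le_add)

lemma monomial_add: "monomial (\<lambda>i. \<alpha> i + \<beta> i) y = monomial \<alpha> y * monomial \<beta> y"
  by (simp add: monomial_def power_add prod.distrib)

lemma poly_fun_deg_le_mult:
  assumes "poly_fun_deg_le j f" "poly_fun_deg_le k g"
  shows "poly_fun_deg_le (j + k) (\<lambda>y. f y * g y)"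
proof -
  obtain c d where f: "f = mpoly j c" and g: "g = mpoly k d"
    using assms by (auto simp: poly_fun_deg_le_iff_mpoly)
  have "poly_fun_deg_le (j + k) (\<lambda>y. \<Sum>\<alpha>\<in>exponents j. \<Sum>\<beta>\<in>exponents k.
      (c \<alpha> * d \<beta>) * monomial (\<lambda>i. \<alpha> i + \<beta> i) y)"
    by (intro poly_fun_deg_le_sum finite_exponents poly_fun_deg_le_monomial)
      (auto simp: exponents_def sum.distrib)
  then show ?thesis
    by (simp add: f g mpoly_def sum_product monomial_add algebra_simps)
qed

lemma poly_fun_deg_le_power:
  "poly_fun_deg_le k f \<Longrightarrow> poly_fun_deg_le (k * m) (\<lambda>y. f y ^ m)"
  by (induction m) (auto simp: poly_fun_deg_le_const dest: poly_fun_deg_le_mult)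

lemma poly_fun_deg_le_prod:
  "finite A \<Longrightarrow> (\<And>a. a \<in> A \<Longrightarrow> poly_fun_deg_le (d a) (f a)) \<Longrightarrow>
    poly_fun_deg_le (sum d A) (\<lambda>y. \<Prod>a\<in>A. f a y)"
  by (induction A rule: finite_induct) (auto intro: poly_fun_deg_le_const poly_fun_deg_le_mult)

lemma poly_fun_deg_le_translate:
  fixes a :: "real^'n::finite"
  assumes "poly_fun_deg_le k f"
  shows "poly_fun_deg_le k (\<lambda>y. f (a + y))"
proof -
  obtain c where c: "f = mpoly k c"
    using assms by (auto simp: poly_fun_deg_le_iff_mpoly)
  have affine: "poly_fun_deg_le 1 (\<lambda>y. a$i + y$i)" for i
    using poly_fun_deg_le_add[OF poly_fun_deg_le_const poly_fun_deg_le_coord] .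
  have "poly_fun_deg_le (sum \<alpha> UNIV) (\<lambda>y. \<Prod>i\<in>UNIV. (a$i + y$i) ^ \<alpha> i)" for \<alpha> :: "'n \<Rightarrow> nat"
    using poly_fun_deg_le_prod[of UNIV \<alpha> "\<lambda>i y. (a$i + y$i) ^ \<alpha> i"]
      poly_fun_deg_le_power[OF affine] by simp
  then have "poly_fun_deg_le k (\<lambda>y. \<Sum>\<alpha>\<in>exponents k. c \<alpha> * (\<Prod>i\<in>UNIV. (a$i + y$i) ^ \<alpha> i))"
    by (intro poly_fun_deg_le_sum finite_exponents poly_fun_deg_le_cmult)
      (auto simp: exponents_def intro: poly_fun_deg_le_mono)
  then show ?thesis by (simp add: c mpoly_def monomial_def)
qed

lemma monomial_scaleR: "monomial \<alpha> (t *\<^sub>R v) = t ^ sum \<alpha> UNIV * monomial \<alpha> v"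
  by (simp add: monomial_def power_mult_distrib prod.distrib power_sum)

lemma mpoly_along_ray: "\<exists>b. \<forall>t. mpoly k c (t *\<^sub>R v) = (\<Sum>j\<le>k. b j * t ^ j)"
proof -
  define b where "b j = (\<Sum>\<alpha>\<in>{\<alpha>\<in>exponents k. sum \<alpha> UNIV = j}. c \<alpha> * monomial \<alpha> v)" for j
  have "mpoly k c (t *\<^sub>R v) = (\<Sum>j\<le>k. b j * t ^ j)" for t
  proof -
    have "mpoly k c (t *\<^sub>R v) = (\<Sum>\<alpha>\<in>exponents k. c \<alpha> * monomial \<alpha> v * t ^ sum \<alpha> UNIV)"
      by (simp add: mpoly_def monomial_scaleR algebra_simps)
    also have "\<dots> = (\<Sum>j\<le>k. \<Sum>\<alpha>\<in>{\<alpha>\<in>exponents k. sum \<alpha> UNIV = j}. c \<alpha> * monomial \<alpha> v * t ^ j)"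
      by (subst sum.group[symmetric, OF finite_exponents finite_atMost])
        (auto simp: exponents_def intro!: sum.cong)
    finally show ?thesis by (simp add: b_def sum_distrib_right)
  qed
  then show ?thesis by blast
qed

lemma poly_fun_deg_le_vanishing_on_ball:
  assumes "poly_fun_deg_le k f" "0 < r" "\<And>y. y \<in> ball a r \<Longrightarrow> f y = 0"
  shows "f z = 0"
proof -
  obtain c where c: "\<And>y. f (a + y) = mpoly k c y"
    using poly_fun_deg_le_translate[OF assms(1), of a] by (metis poly_fun_deg_le_iff_mpoly)
  obtain b where b: "\<And>t. f (a + t *\<^sub>R (z - a)) = (\<Sum>j\<le>k. b j * t ^ j)"
    using mpoly_along_ray[of k c "z - a"] c by metis
  define \<epsilon> where "\<epsilon> = r / (norm (z - a) + 1)"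
  have "0 < \<epsilon>" using assms(2) by (simp add: \<epsilon>_def add_nonneg_pos)
  have "{0<..<\<epsilon>} \<subseteq> {t. (\<Sum>j\<le>k. b j * t ^ j) = 0}"
  proof
    fix t assume t: "t \<in> {0<..<\<epsilon>}"
    then have "t * (norm (z - a) + 1) < r"
      by (simp add: \<epsilon>_def pos_less_divide_eq add_nonneg_pos)
    then have "t * norm (z - a) < r"
      using t by (simp add: distrib_left)
    then have "a + t *\<^sub>R (z - a) \<in> ball a r"
      using t by (simp add: dist_norm)
    then have "f (a + t *\<^sub>R (z - a)) = 0" by (rule assms(3))
    then show "t \<in> {t. (\<Sum>j\<le>k. b j * t ^ j) = 0}" by (simp add: b)
  qed
  then have "infinite {t. (\<Sum>j\<le>k. b j * t ^ j) = 0}"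
    using \<open>0 < \<epsilon>\<close> infinite_Ioo infinite_super by blast
  then have "\<forall>j\<le>k. b j = 0" using polyfun_finite_roots by blast
  then show ?thesis using b[of 1] by simp
qed

section \<open>Coefficient bounds from bounds on the unit ball\<close>

definition coeff_norm :: "nat \<Rightarrow> (('n::finite \<Rightarrow> nat) \<Rightarrow> real) \<Rightarrow> real" where
  "coeff_norm k c = (\<Sum>\<alpha>\<in>exponents k. \<bar>c \<alpha>\<bar>)"

lemma coeff_norm_nonneg: "0 \<le> coeff_norm k c"
  by (simp add: coeff_norm_def sum_nonneg)

lemma abs_coeff_le_coeff_norm: "\<alpha> \<in> exponents k \<Longrightarrow> \<bar>c \<alpha>\<bar> \<le> coeff_norm k c"
  unfolding coeff_norm_def by (rule member_le_sum) (auto simp: finite_exponents)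

lemma coeff_norm_cmult: "coeff_norm k (\<lambda>\<alpha>. a * c \<alpha>) = \<bar>a\<bar> * coeff_norm k c"
  by (simp add: coeff_norm_def abs_mult sum_distrib_left)

lemma abs_monomial_le_1: "norm x \<le> 1 \<Longrightarrow> \<bar>monomial \<alpha> x\<bar> \<le> 1"
  unfolding monomial_def abs_prod power_abs
  by (intro prod_le_1 conjI zero_le_power power_le_one abs_ge_zero)
    (meson component_le_norm_cart order_trans)

lemma abs_mpoly_le_coeff_norm: "norm x \<le> 1 \<Longrightarrow> \<bar>mpoly k c x\<bar> \<le> coeff_norm k c"
  unfolding mpoly_def coeff_norm_def
  by (rule order_trans[OF sum_abs sum_mono])
    (simp add: abs_mult mult_left_le abs_monomial_le_1)

lemma mpoly_diff: "mpoly k c x - mpoly k d x = mpoly k (\<lambda>\<alpha>. c \<alpha> - d \<alpha>) x"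
  by (simp add: mpoly_def sum_subtractf[symmetric] algebra_simps)

lemma tendsto_mpoly:
  "\<forall>\<alpha>\<in>exponents k. (\<lambda>m. c m \<alpha>) \<longlonglongrightarrow> d \<alpha> \<Longrightarrow> (\<lambda>m. mpoly k (c m) x) \<longlonglongrightarrow> mpoly k d x"
  unfolding mpoly_def by (intro tendsto_sum tendsto_mult tendsto_const) auto

lemma tendsto_coeff_norm:
  "\<forall>\<alpha>\<in>exponents k. (\<lambda>m. c m \<alpha>) \<longlonglongrightarrow> d \<alpha> \<Longrightarrow> (\<lambda>m. coeff_norm k (c m)) \<longlonglongrightarrow> coeff_norm k d"
  unfolding coeff_norm_def by (intro tendsto_sum tendsto_rabs) auto

lemma tendsto_coeff_norm_diff:
  "\<forall>\<alpha>\<in>exponents k. (\<lambda>m. c m \<alpha>) \<longlonglongrightarrow> d \<alpha> \<Longrightarrow>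
    (\<lambda>m. coeff_norm k (\<lambda>\<alpha>. c m \<alpha> - d \<alpha>)) \<longlonglongrightarrow> 0"
  using tendsto_coeff_norm[of k "\<lambda>m \<alpha>. c m \<alpha> - d \<alpha>" "\<lambda>_. 0"]
  by (simp add: coeff_norm_def LIM_zero)

lemma convergent_subseq_finite_family:
  fixes x :: "nat \<Rightarrow> 'a \<Rightarrow> 'b::heine_borel"
  assumes "finite A" "\<And>a. a \<in> A \<Longrightarrow> bounded (range (\<lambda>m. x m a))"
  obtains r L where "strict_mono r" "\<And>a. a \<in> A \<Longrightarrow> (\<lambda>m. x (r m) a) \<longlonglongrightarrow> L a"
proof -
  have "\<exists>r L. strict_mono r \<and> (\<forall>a\<in>A. (\<lambda>m. x (r m) a) \<longlonglongrightarrow> L a)"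
    using assms
  proof (induction A rule: finite_induct)
    case empty
    show ?case by (rule exI[of _ id]) (simp add: strict_mono_def)
  next
    case (insert a A)
    then obtain r L where r: "strict_mono r" and L: "\<forall>a\<in>A. (\<lambda>m. x (r m) a) \<longlonglongrightarrow> L a"
      by auto
    have "bounded (range (\<lambda>m. x (r m) a))"
      using insert.prems by (rule bounded_subset) auto
    then obtain l s where s: "strict_mono s" and l: "((\<lambda>m. x (r m) a) \<circ> s) \<longlonglongrightarrow> l"
      using bounded_imp_convergent_subsequence by blast
    have "(\<lambda>m. x (r (s m)) b) \<longlonglongrightarrow> (L(a := l)) b" if "b \<in> insert a A" for b
    proof (cases "b = a")
      case False
      then have "((\<lambda>m. x (r m) b) \<circ> s) \<longlonglongrightarrow> L b"
        using L s that by (intro LIMSEQ_subseq_LIMSEQ) auto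
      then show ?thesis using False by (simp add: comp_def)
    qed (use l in \<open>simp add: comp_def\<close>)
    then show ?case
      using strict_mono_o[OF r s] unfolding comp_def
      by (intro exI[of _ "\<lambda>m. r (s m)"] exI[of _ "L(a := l)"]) auto
  qed
  then show ?thesis using that by blast
qed

text \<open>The coefficients of a polynomial function are in fact unique, but the argument below
  only needs a representation of least coefficient norm.\<close>

definition min_coeff_rep :: "nat \<Rightarrow> (('n::finite \<Rightarrow> nat) \<Rightarrow> real) \<Rightarrow> bool" where
  "min_coeff_rep k d \<longleftrightarrow> (\<forall>d'. mpoly k d' = mpoly k d \<longrightarrow> coeff_norm k d \<le> coeff_norm k d')"

lemma min_coeff_rep_exists: "\<exists>d. mpoly k d = mpoly k c \<and> min_coeff_rep k d"
proof -
  define s where "s = Inf {coeff_norm k d | d. mpoly k d = mpoly k c}"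
  have s_le: "s \<le> coeff_norm k d" if "mpoly k d = mpoly k c" for d
    unfolding s_def using that coeff_norm_nonneg
    by (intro cInf_lower bdd_belowI[of _ 0]) auto
  have "\<exists>d. mpoly k d = mpoly k c \<and> coeff_norm k d < s + inverse (real (Suc m))" for m
    using cInf_lessD[of "{coeff_norm k d | d. mpoly k d = mpoly k c}" "s + inverse (real (Suc m))"]
    by (auto simp: s_def)
  then obtain d where d: "\<And>m. mpoly k (d m) = mpoly k c"
    and d_less: "\<And>m. coeff_norm k (d m) < s + inverse (real (Suc m))"
    by metis
  have "(\<lambda>m. coeff_norm k (d m)) \<longlonglongrightarrow> s"
  proof (rule tendsto_sandwich[of "\<lambda>_. s" _ _ "\<lambda>m. s + inverse (real (Suc m))"])
    show "(\<lambda>m. s + inverse (real (Suc m))) \<longlonglongrightarrow> s"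
      using tendsto_add[OF tendsto_const LIMSEQ_inverse_real_of_nat] by simp
    show "\<forall>\<^sub>F m in sequentially. s \<le> coeff_norm k (d m)"
      using s_le d by simp
    show "\<forall>\<^sub>F m in sequentially. coeff_norm k (d m) \<le> s + inverse (real (Suc m))"
      using d_less by (simp add: less_imp_le)
  qed simp
  moreover have "bounded (range (\<lambda>m. d m \<alpha>))" if "\<alpha> \<in> exponents k" for \<alpha>
  proof -
    have "\<bar>d m \<alpha>\<bar> \<le> s + 1" for m
      using abs_coeff_le_coeff_norm[OF that, of "d m"] d_less[of m]
        inverse_le_1_iff[of "real (Suc m)"] by linarith
    then show ?thesis by (auto simp: bounded_iff)
  qed
  then obtain r L where r: "strict_mono r"
    and L: "\<And>\<alpha>. \<alpha> \<in> exponents k \<Longrightarrow> (\<lambda>m. d (r m) \<alpha>) \<longlonglongrightarrow> L \<alpha>"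
    using convergent_subseq_finite_family[OF finite_exponents] by blast
  ultimately have "coeff_norm k L = s"
  proof -
    assume "(\<lambda>m. coeff_norm k (d m)) \<longlonglongrightarrow> s"
    from LIMSEQ_subseq_LIMSEQ[OF this r]
    have "(\<lambda>m. coeff_norm k (d (r m))) \<longlonglongrightarrow> s" by (simp add: comp_def)
    moreover have "(\<lambda>m. coeff_norm k (d (r m))) \<longlonglongrightarrow> coeff_norm k L"
      using L by (intro tendsto_coeff_norm) auto
    ultimately show ?thesis using LIMSEQ_unique by blast
  qed
  moreover have "mpoly k L = mpoly k c"
  proof
    fix x
    show "mpoly k L x = mpoly k c x"
      using tendsto_mpoly[of k "\<lambda>m. d (r m)" L x] L by (simp add: d LIMSEQ_const_iff)
  qed
  ultimately show ?thesis using s_le by (auto simp: min_coeff_rep_def)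
qed

lemma min_coeff_rep_cmult:
  assumes "min_coeff_rep k d"
  shows "min_coeff_rep k (\<lambda>\<alpha>. a * d \<alpha>)"
  unfolding min_coeff_rep_def
proof (intro allI impI)
  fix d' assume d': "mpoly k d' = mpoly k (\<lambda>\<alpha>. a * d \<alpha>)"
  show "coeff_norm k (\<lambda>\<alpha>. a * d \<alpha>) \<le> coeff_norm k d'"
  proof (cases "a = 0")
    case False
    have "mpoly k (\<lambda>\<alpha>. inverse a * d' \<alpha>) x = mpoly k d x" for x
      using d' False by (simp flip: mpoly_cmult)
    then have "coeff_norm k d \<le> coeff_norm k (\<lambda>\<alpha>. inverse a * d' \<alpha>)"
      using assms by (auto simp: min_coeff_rep_def)
    then have "coeff_norm k d \<le> \<bar>inverse a\<bar> * coeff_norm k d'"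
      by (simp only: coeff_norm_cmult)
    then show ?thesis
      using False by (simp add: coeff_norm_cmult abs_inverse field_simps)
  qed (simp add: coeff_norm_def sum_nonneg)
qed

lemma mpoly_eq_0_if_tendsto_0_on_ball:
  fixes e :: "nat \<Rightarrow> ('n::finite \<Rightarrow> nat) \<Rightarrow> real"
  assumes "\<forall>\<alpha>\<in>exponents k. (\<lambda>m. e m \<alpha>) \<longlonglongrightarrow> E \<alpha>"
    and "\<And>x. x \<in> ball 0 1 \<Longrightarrow> (\<lambda>m. mpoly k (e m) x) \<longlonglongrightarrow> 0"
  shows "mpoly k E z = 0"
proof (rule poly_fun_deg_le_vanishing_on_ball[OF poly_fun_deg_le_mpoly zero_less_one])
  fix x :: "real^'n" assume "x \<in> ball 0 1"
  then show "mpoly k E x = 0"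
    using tendsto_mpoly[OF assms(1)] assms(2) LIMSEQ_unique by blast
qed

lemma min_coeff_rep_lower_bound:
  "\<exists>\<delta>>0. \<forall>e :: ('n::finite \<Rightarrow> nat) \<Rightarrow> real. min_coeff_rep k e \<and> coeff_norm k e = 1 \<longrightarrow>
    (\<exists>x\<in>ball 0 1. \<delta> \<le> \<bar>mpoly k e x\<bar>)"
proof (rule ccontr)
  assume "\<not> ?thesis"
  then have "\<forall>\<delta>>0. \<exists>e :: ('n \<Rightarrow> nat) \<Rightarrow> real. min_coeff_rep k e \<and> coeff_norm k e = 1 \<and>
      (\<forall>x\<in>ball 0 1. \<bar>mpoly k e x\<bar> < \<delta>)"
    by (simp add: not_le)
  then have "\<exists>e :: ('n \<Rightarrow> nat) \<Rightarrow> real. min_coeff_rep k e \<and> coeff_norm k e = 1 \<and>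
      (\<forall>x\<in>ball 0 1. \<bar>mpoly k e x\<bar> < inverse (real (Suc m)))" for m
    by simp
  then obtain e :: "nat \<Rightarrow> ('n \<Rightarrow> nat) \<Rightarrow> real"
    where e_min: "\<And>m. min_coeff_rep k (e m)" and e_norm: "\<And>m. coeff_norm k (e m) = 1"
      and e_small: "\<And>m x. x \<in> ball 0 1 \<Longrightarrow> \<bar>mpoly k (e m) x\<bar> < inverse (real (Suc m))"
    by metis
  have "bounded (range (\<lambda>m. e m \<alpha>))" if "\<alpha> \<in> exponents k" for \<alpha>
  proof -
    have "\<bar>e m \<alpha>\<bar> \<le> 1" for m
      using abs_coeff_le_coeff_norm[OF that, of "e m"] e_norm by simp
    then show ?thesis by (auto simp: bounded_iff)
  qed
  then obtain r E where r: "strict_mono r"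
    and E: "\<And>\<alpha>. \<alpha> \<in> exponents k \<Longrightarrow> (\<lambda>m. e (r m) \<alpha>) \<longlonglongrightarrow> E \<alpha>"
    using convergent_subseq_finite_family[OF finite_exponents] by blast
  have "(\<lambda>m. mpoly k (e m) x) \<longlonglongrightarrow> 0" if "x \<in> ball 0 1" for x
    using e_small[OF that]
    by (intro Lim_null_comparison[OF always_eventually LIMSEQ_inverse_real_of_nat]) (simp add: less_imp_le)
  then have E_zero: "mpoly k E x = 0" for x
    using E LIMSEQ_subseq_LIMSEQ[OF _ r]
    by (intro mpoly_eq_0_if_tendsto_0_on_ball[of k "\<lambda>m. e (r m)"]) (auto simp: comp_def)
  \<comment> \<open>Subtracting the null polynomial \<open>E\<close> cannot decrease the norm of a minimal representation.\<close>
  have "1 \<le> coeff_norm k (\<lambda>\<alpha>. e (r m) \<alpha> - E \<alpha>)" for m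
  proof -
    have "mpoly k (\<lambda>\<alpha>. e (r m) \<alpha> - E \<alpha>) x = mpoly k (e (r m)) x" for x
      by (simp flip: mpoly_diff add: E_zero)
    then show ?thesis
      using e_min[of "r m"] e_norm[of "r m"] by (auto simp: min_coeff_rep_def)
  qed
  moreover have "(\<lambda>m. coeff_norm k (\<lambda>\<alpha>. e (r m) \<alpha> - E \<alpha>)) \<longlonglongrightarrow> 0"
    using E by (intro tendsto_coeff_norm_diff) auto
  ultimately have "(1::real) \<le> 0"
    by (intro LIMSEQ_le_const[of "\<lambda>m. coeff_norm k (\<lambda>\<alpha>. e (r m) \<alpha> - E \<alpha>)"]) auto
  then show False by simp
qed

lemma mpoly_coeff_norm_bound:
  "\<exists>C. \<forall>c :: ('n::finite \<Rightarrow> nat) \<Rightarrow> real. (\<forall>x\<in>ball 0 1. \<bar>mpoly k c x\<bar> \<le> B) \<longrightarrow>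
    (\<exists>c'. mpoly k c' = mpoly k c \<and> coeff_norm k c' \<le> C)"
proof -
  obtain \<delta> where "0 < \<delta>" and \<delta>: "\<forall>e :: ('n \<Rightarrow> nat) \<Rightarrow> real. min_coeff_rep k e \<and> coeff_norm k e = 1 \<longrightarrow>
      (\<exists>x\<in>ball 0 1. \<delta> \<le> \<bar>mpoly k e x\<bar>)"
    using min_coeff_rep_lower_bound by blast
  have bound: "coeff_norm k d \<le> \<bar>B\<bar> / \<delta>"
    if "min_coeff_rep k d" and d_bd: "\<forall>x\<in>ball 0 1. \<bar>mpoly k d x\<bar> \<le> B"
    for d :: "('n \<Rightarrow> nat) \<Rightarrow> real"
  proof -
    define N where "N = coeff_norm k d"
    have "N \<noteq> 0 \<Longrightarrow> \<delta> * N \<le> \<bar>B\<bar>"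
    proof -
      assume "N \<noteq> 0"
      then have "0 < N" using coeff_norm_nonneg[of k d] by (simp add: N_def)
      have "min_coeff_rep k (\<lambda>\<alpha>. inverse N * d \<alpha>)" "coeff_norm k (\<lambda>\<alpha>. inverse N * d \<alpha>) = 1"
        using min_coeff_rep_cmult[OF that(1)] \<open>0 < N\<close> by (simp_all add: coeff_norm_cmult N_def)
      then obtain x where "x \<in> ball 0 1" and "\<delta> \<le> \<bar>mpoly k (\<lambda>\<alpha>. inverse N * d \<alpha>) x\<bar>"
        using \<delta> by blast
      then have "\<delta> \<le> \<bar>mpoly k d x\<bar> / N" and "\<bar>mpoly k d x\<bar> \<le> B"
        using \<open>0 < N\<close> d_bd by (simp_all flip: mpoly_cmult add: abs_mult divide_inverse mult.commute)
      then show ?thesis using \<open>0 < N\<close> by (simp add: le_divide_eq)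
    qed
    then show ?thesis
      using \<open>0 < \<delta>\<close> by (cases "N = 0") (simp_all add: N_def field_simps)
  qed
  show ?thesis
  proof (intro exI[of _ "\<bar>B\<bar> / \<delta>"] allI impI)
    fix c :: "('n \<Rightarrow> nat) \<Rightarrow> real" assume "\<forall>x\<in>ball 0 1. \<bar>mpoly k c x\<bar> \<le> B"
    moreover obtain d where "mpoly k d = mpoly k c" "min_coeff_rep k d"
      using min_coeff_rep_exists by blast
    ultimately show "\<exists>c'. mpoly k c' = mpoly k c \<and> coeff_norm k c' \<le> \<bar>B\<bar> / \<delta>"
      using bound[of d] by auto
  qed
qed

lemma poly_fun_deg_le_normal_form:
  "\<exists>C. \<forall>f (c :: real^'n::finite). poly_fun_deg_le k f \<and> (\<forall>x\<in>ball c 1. \<bar>f x - f c\<bar> \<le> B) \<longrightarrow>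
    (\<exists>b. coeff_norm k b \<le> C \<and> (\<forall>x. f x = f c + mpoly k b (x - c)))"
proof -
  obtain C where C: "\<And>a :: ('n \<Rightarrow> nat) \<Rightarrow> real. \<forall>y\<in>ball 0 1. \<bar>mpoly k a y\<bar> \<le> B \<Longrightarrow>
      \<exists>b. mpoly k b = mpoly k a \<and> coeff_norm k b \<le> C"
    using mpoly_coeff_norm_bound[of k B] by blast
  have "\<exists>b. coeff_norm k b \<le> C \<and> (\<forall>x. f x = f c + mpoly k b (x - c))"
    if f: "poly_fun_deg_le k f" and osc: "\<forall>x\<in>ball c 1. \<bar>f x - f c\<bar> \<le> B" for f and c :: "real^'n"
  proof -
    have "poly_fun_deg_le k (\<lambda>y. f (c + y) + (- f c))"
      using poly_fun_deg_le_add[OF poly_fun_deg_le_translate[OF f] poly_fun_deg_le_const] .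
    then obtain a where "(\<lambda>y. f (c + y) + (- f c)) = mpoly k a"
      unfolding poly_fun_deg_le_iff_mpoly by blast
    then have a: "f (c + y) - f c = mpoly k a y" for y
      using fun_cong[of "\<lambda>y. f (c + y) + (- f c)" "mpoly k a" y] by simp
    have "\<bar>mpoly k a y\<bar> \<le> B" if "y \<in> ball 0 1" for y
    proof -
      have "c + y \<in> ball c 1" using that by (simp add: dist_norm)
      then have "\<bar>f (c + y) - f c\<bar> \<le> B" using osc by blast
      then show ?thesis by (simp only: a)
    qed
    then obtain b where "mpoly k b = mpoly k a" "coeff_norm k b \<le> C"
      using C by blast
    moreover have "f x = f c + mpoly k b (x - c)" for x
      using a[of "x - c"] \<open>mpoly k b = mpoly k a\<close> by simp
    ultimately show ?thesis by blast
  qed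
  then show ?thesis by blast
qed

definition monomial_grad :: "('n::finite \<Rightarrow> nat) \<Rightarrow> real^'n \<Rightarrow> real^'n" where
  "monomial_grad \<alpha> y = (\<chi> i. real (\<alpha> i) * y$i ^ (\<alpha> i - 1) * (\<Prod>j\<in>UNIV-{i}. y$j ^ \<alpha> j))"

definition mpoly_grad :: "nat \<Rightarrow> (('n::finite \<Rightarrow> nat) \<Rightarrow> real) \<Rightarrow> real^'n \<Rightarrow> real^'n" where
  "mpoly_grad k c y = (\<Sum>\<alpha>\<in>exponents k. c \<alpha> *\<^sub>R monomial_grad \<alpha> y)"

lemma has_derivative_monomial: "(monomial \<alpha> has_derivative (\<lambda>h. monomial_grad \<alpha> y \<bullet> h)) (at y)"
proof -
  have "((\<lambda>x. x$i) has_derivative (\<lambda>h. h$i)) (at y)" for i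
    by (rule bounded_linear_imp_has_derivative[OF bounded_linear_vec_nth])
  then have "((\<lambda>x. \<Prod>i\<in>UNIV. x$i ^ \<alpha> i) has_derivative (\<lambda>h. \<Sum>i\<in>UNIV.
      (of_nat (\<alpha> i) * h$i * y$i ^ (\<alpha> i - 1)) * (\<Prod>j\<in>UNIV-{i}. y$j ^ \<alpha> j))) (at y)"
    by (intro has_derivative_prod has_derivative_power)
  moreover have "(\<lambda>h. \<Sum>i\<in>UNIV. (of_nat (\<alpha> i) * h$i * y$i ^ (\<alpha> i - 1)) *
      (\<Prod>j\<in>UNIV-{i}. y$j ^ \<alpha> j)) = (\<lambda>h. monomial_grad \<alpha> y \<bullet> h)"
    by (simp add: monomial_grad_def inner_vec_def algebra_simps)
  ultimately show ?thesis by (simp add: monomial_def[abs_def])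
qed

lemma has_derivative_mpoly: "(mpoly k c has_derivative (\<lambda>h. mpoly_grad k c y \<bullet> h)) (at y)"
proof -
  have "((\<lambda>x. \<Sum>\<alpha>\<in>exponents k. c \<alpha> * monomial \<alpha> x) has_derivative
      (\<lambda>h. \<Sum>\<alpha>\<in>exponents k. c \<alpha> * (monomial_grad \<alpha> y \<bullet> h))) (at y)"
    by (intro has_derivative_sum has_derivative_mult_right has_derivative_monomial)
  then show ?thesis
    by (simp add: mpoly_def[abs_def] mpoly_grad_def inner_sum_left)
qed

lemma grad_eqI: "(f has_derivative (\<lambda>h. G \<bullet> h)) (at y) \<Longrightarrow> grad f y = G"
  by (simp add: grad_def frechet_derivative_at[symmetric] vec_eq_iff inner_axis)

lemma grad_shifted_mpoly: "grad (\<lambda>x. t + mpoly k c (x - a)) x = mpoly_grad k c (x - a)"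
proof (rule grad_eqI)
  have "((\<lambda>x. x - a) has_derivative (\<lambda>h. h)) (at x)"
    by (auto intro!: derivative_eq_intros)
  from diff_chain_at[OF this has_derivative_mpoly]
  show "((\<lambda>x. t + mpoly k c (x - a)) has_derivative (\<lambda>h. mpoly_grad k c (x - a) \<bullet> h)) (at x)"
    by (auto simp: comp_def intro!: derivative_eq_intros)
qed

lemma poly_fun_deg_le_has_derivative:
  assumes "poly_fun_deg_le k f"
  shows "(f has_derivative (\<lambda>h. grad f y \<bullet> h)) (at y)"
proof -
  obtain c where "f = mpoly k c"
    using assms by (auto simp: poly_fun_deg_le_iff_mpoly)
  moreover have "grad (mpoly k c) y = mpoly_grad k c y"
    using grad_shifted_mpoly[of 0 k c 0 y] by simp
  ultimately show ?thesis using has_derivative_mpoly[of k c y] by simp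
qed

lemma norm_monomial_grad_le:
  assumes "norm y \<le> 1"
  shows "norm (monomial_grad \<alpha> y) \<le> real (sum \<alpha> UNIV)"
proof -
  have y: "\<bar>y$j\<bar> \<le> 1" for j
    using component_le_norm_cart[of y j] assms by linarith
  have "\<bar>monomial_grad \<alpha> y $ i\<bar> \<le> real (\<alpha> i)" for i
  proof -
    have "\<bar>y$i ^ (\<alpha> i - 1) * (\<Prod>j\<in>UNIV-{i}. y$j ^ \<alpha> j)\<bar> \<le> 1"
      unfolding abs_mult abs_prod power_abs
      by (intro mult_le_one prod_le_1 power_le_one conjI zero_le_power abs_ge_zero y prod_nonneg)
    then show ?thesis
      by (simp add: monomial_grad_def abs_mult mult_left_le mult.assoc)
  qed
  then have "norm (monomial_grad \<alpha> y) \<le> (\<Sum>i\<in>UNIV. real (\<alpha> i))"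
    by (intro order_trans[OF norm_le_l1_cart sum_mono])
  then show ?thesis by simp
qed

lemma norm_mpoly_grad_le:
  assumes "norm y \<le> 1"
  shows "norm (mpoly_grad k c y) \<le> coeff_norm k c * real k"
proof -
  have "norm (c \<alpha> *\<^sub>R monomial_grad \<alpha> y) \<le> \<bar>c \<alpha>\<bar> * real k" if "\<alpha> \<in> exponents k" for \<alpha>
  proof -
    have "sum \<alpha> UNIV \<le> k" using that by (simp add: exponents_def)
    then have "real (sum \<alpha> UNIV) \<le> real k" by (simp only: of_nat_le_iff)
    then have "norm (monomial_grad \<alpha> y) \<le> real k"
      using norm_monomial_grad_le[OF assms, of \<alpha>] by linarith
    then show ?thesis by (simp add: mult_left_mono)
  qed
  then have "norm (mpoly_grad k c y) \<le> (\<Sum>\<alpha>\<in>exponents k. \<bar>c \<alpha>\<bar> * real k)"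
    unfolding mpoly_grad_def by (intro order_trans[OF norm_sum sum_mono])
  then show ?thesis by (simp add: coeff_norm_def sum_distrib_right)
qed

lemma tendsto_mpoly_grad:
  "\<forall>\<alpha>\<in>exponents k. (\<lambda>m. c m \<alpha>) \<longlonglongrightarrow> d \<alpha> \<Longrightarrow>
    (\<lambda>m. mpoly_grad k (c m) y) \<longlonglongrightarrow> mpoly_grad k d y"
  unfolding mpoly_grad_def by (intro tendsto_sum tendsto_scaleR tendsto_const) auto

section \<open>Pairs with vanishing skew gradient\<close>

lemma linear_relation_imp_pmap_in_line:
  assumes "\<alpha>1 \<noteq> 0 \<or> \<alpha>2 \<noteq> 0" "\<And>y. y \<in> S \<Longrightarrow> \<alpha>1 * g y - \<alpha>2 * f y = \<kappa>"
  shows "\<exists>L. is_line L \<and> (\<forall>y\<in>S. pmap f g y \<in> L)"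
proof -
  \<comment> \<open>The solutions of \<open>\<alpha>1 z\<^sub>2 - \<alpha>2 z\<^sub>1 = \<kappa>\<close> form the line through \<open>a\<close> in direction \<open>v\<close>.\<close>
  define n where "n = \<alpha>1\<^sup>2 + \<alpha>2\<^sup>2"
  have "n \<noteq> 0" using assms(1) by (auto simp: n_def)
  define a :: "real^2" where "a = (\<kappa> / n) *\<^sub>R vector [- \<alpha>2, \<alpha>1]"
  define v :: "real^2" where "v = vector [\<alpha>1, \<alpha>2]"
  have "v \<noteq> 0" using assms(1) by (auto simp: v_def vec_eq_iff forall_2)
  then have "is_line {a + t *\<^sub>R v | t. True}" by (auto simp: is_line_def)
  moreover have "pmap f g y = a + ((\<alpha>1 * f y + \<alpha>2 * g y) / n) *\<^sub>R v" if "y \<in> S" for y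
  proof -
    have \<kappa>: "\<kappa> = \<alpha>1 * g y - \<alpha>2 * f y" using assms(2)[OF that] by simp
    have "- \<kappa> * \<alpha>2 + (\<alpha>1 * f y + \<alpha>2 * g y) * \<alpha>1 = f y * n"
      and "\<kappa> * \<alpha>1 + (\<alpha>1 * f y + \<alpha>2 * g y) * \<alpha>2 = g y * n"
      by (simp_all add: \<kappa> n_def power2_eq_square algebra_simps)
    moreover have "(a + ((\<alpha>1 * f y + \<alpha>2 * g y) / n) *\<^sub>R v) $ 1
        = (- \<kappa> * \<alpha>2 + (\<alpha>1 * f y + \<alpha>2 * g y) * \<alpha>1) / n"
      and "(a + ((\<alpha>1 * f y + \<alpha>2 * g y) / n) *\<^sub>R v) $ 2
        = (\<kappa> * \<alpha>1 + (\<alpha>1 * f y + \<alpha>2 * g y) * \<alpha>2) / n"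
      using \<open>n \<noteq> 0\<close> by (simp_all add: a_def v_def field_simps)
    ultimately show ?thesis
      using \<open>n \<noteq> 0\<close> by (simp add: pmap_def vec_eq_iff forall_2)
  qed
  ultimately show ?thesis by blast
qed

lemma skew_grad_zero_imp_proportional:
  assumes f: "poly_fun_deg_le k f" and g: "poly_fun_deg_le k g"
    and zero: "\<And>y. y \<in> ball a r \<Longrightarrow> skew_grad f g y = 0"
    and y0: "y0 \<in> ball a r" and "f y0 \<noteq> 0"
  shows "f y0 * g z = g y0 * f z"
proof -
  have "continuous_on UNIV f"
    using has_derivative_continuous[OF poly_fun_deg_le_has_derivative[OF f]]
    by (simp add: continuous_at_imp_continuous_on)
  then have "open (ball a r \<inter> {y. f y \<noteq> 0})"
    by (intro open_Int open_ball open_Collect_neq continuous_on_const)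
  moreover have "y0 \<in> ball a r \<inter> {y. f y \<noteq> 0}"
    using y0 \<open>f y0 \<noteq> 0\<close> by simp
  ultimately obtain \<delta> where "0 < \<delta>" and \<delta>: "ball y0 \<delta> \<subseteq> ball a r \<inter> {y. f y \<noteq> 0}"
    by (rule openE)
  \<comment> \<open>The derivative of \<open>g / f\<close> is \<open>skew_grad f g / f\<^sup>2\<close>.\<close>
  have "\<exists>\<kappa>. \<forall>y\<in>ball y0 \<delta>. g y / f y = \<kappa>"
  proof (rule has_derivative_zero_constant[OF convex_ball])
    fix y assume y: "y \<in> ball y0 \<delta>"
    then have "f y \<noteq> 0" "skew_grad f g y = 0" using \<delta> zero by auto
    have "((\<lambda>x. g x / f x) has_derivative
        (\<lambda>h. ((grad g y \<bullet> h) * f y - g y * (grad f y \<bullet> h)) / (f y * f y))) (at y within ball y0 \<delta>)"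
      by (rule has_derivative_divide'[OF
            has_derivative_at_withinI[OF poly_fun_deg_le_has_derivative[OF g]]
            has_derivative_at_withinI[OF poly_fun_deg_le_has_derivative[OF f]] \<open>f y \<noteq> 0\<close>])
    moreover have "(grad g y \<bullet> h) * f y - g y * (grad f y \<bullet> h) = skew_grad f g y \<bullet> h" for h
      by (simp add: skew_grad_def inner_diff_left algebra_simps)
    ultimately show "((\<lambda>x. g x / f x) has_derivative (\<lambda>h. 0)) (at y within ball y0 \<delta>)"
      using \<open>skew_grad f g y = 0\<close> by simp
  qed
  then obtain \<kappa> where "\<forall>y\<in>ball y0 \<delta>. g y / f y = \<kappa>"
    by blast
  have \<kappa>: "g y = \<kappa> * f y" if "y \<in> ball y0 \<delta>" for y
  proof -
    have "f y \<noteq> 0" using \<delta> that by blast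
    moreover have "g y / f y = \<kappa>" using \<open>\<forall>y\<in>ball y0 \<delta>. g y / f y = \<kappa>\<close> that by blast
    ultimately show ?thesis by (simp add: field_simps)
  qed
  have "poly_fun_deg_le k (\<lambda>y. f y0 * g y + (- g y0) * f y)"
    by (intro poly_fun_deg_le_add poly_fun_deg_le_cmult f g)
  from poly_fun_deg_le_vanishing_on_ball[OF this \<open>0 < \<delta>\<close>, of y0 z]
  show ?thesis using \<kappa> \<open>0 < \<delta>\<close> by simp
qed

lemma skew_grad_zero_imp_linear_relation:
  assumes f: "poly_fun_deg_le k f" and g: "poly_fun_deg_le k g"
    and zero: "\<And>y. y \<in> ball a r \<Longrightarrow> skew_grad f g y = 0"
  shows "\<exists>\<alpha>1 \<alpha>2. (\<alpha>1 \<noteq> 0 \<or> \<alpha>2 \<noteq> 0) \<and> (\<forall>y\<in>ball a r. \<alpha>1 * g y = \<alpha>2 * f y)"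
proof (cases "\<exists>y0\<in>ball a r. f y0 \<noteq> 0 \<or> g y0 \<noteq> 0")
  case True
  then obtain y0 where y0: "y0 \<in> ball a r" and nz: "f y0 \<noteq> 0 \<or> g y0 \<noteq> 0" by blast
  have "f y0 * g z = g y0 * f z" for z
  proof (cases "f y0 \<noteq> 0")
    case True
    then show ?thesis using skew_grad_zero_imp_proportional[OF f g zero y0] by blast
  next
    case False
    have "skew_grad g f y = 0" if "y \<in> ball a r" for y
      using zero[OF that] by (simp add: skew_grad_def)
    then show ?thesis
      using skew_grad_zero_imp_proportional[OF g f _ y0] nz False by (metis mult.commute)
  qed
  then show ?thesis using nz by blast
qed auto

text \<open>For \<open>u = v / D\<close> and \<open>w = 1 / D\<close> this is the skew gradient of \<open>v + P\<close> divided by \<open>D\<close>;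
  unlike that quotient it keeps its meaning in the limit \<open>w = 0\<close>.\<close>

definition skew_field ::
  "nat \<Rightarrow> (('n::finite \<Rightarrow> nat) \<Rightarrow> real) \<Rightarrow> (('n \<Rightarrow> nat) \<Rightarrow> real) \<Rightarrow> real \<Rightarrow> real \<Rightarrow> real \<Rightarrow>
    real^'n \<Rightarrow> real^'n" where
  "skew_field k b1 b2 u1 u2 w y =
     (u1 + w * mpoly k b1 y) *\<^sub>R mpoly_grad k b2 y - (u2 + w * mpoly k b2 y) *\<^sub>R mpoly_grad k b1 y"

lemma skew_grad_eq_skew_field:
  assumes "\<And>x. p1 x = v1 + mpoly k b1 (x - c)" "\<And>x. p2 x = v2 + mpoly k b2 (x - c)"
  shows "skew_grad p1 p2 x = skew_field k b1 b2 v1 v2 1 (x - c)"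
proof -
  have "p1 = (\<lambda>x. v1 + mpoly k b1 (x - c))" "p2 = (\<lambda>x. v2 + mpoly k b2 (x - c))"
    using assms by auto
  then show ?thesis by (simp add: skew_grad_def skew_field_def grad_shifted_mpoly)
qed

lemma skew_field_scale:
  "skew_field k b1 b2 (s * u1) (s * u2) (s * w) y = s *\<^sub>R skew_field k b1 b2 u1 u2 w y"
  by (simp add: skew_field_def scaleR_diff_right algebra_simps)

lemma tendsto_skew_field:
  assumes "\<forall>\<alpha>\<in>exponents k. (\<lambda>m. B1 m \<alpha>) \<longlonglongrightarrow> b1 \<alpha>" "\<forall>\<alpha>\<in>exponents k. (\<lambda>m. B2 m \<alpha>) \<longlonglongrightarrow> b2 \<alpha>"
    and "U1 \<longlonglongrightarrow> u1" "U2 \<longlonglongrightarrow> u2" "W \<longlonglongrightarrow> w"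
  shows "(\<lambda>m. skew_field k (B1 m) (B2 m) (U1 m) (U2 m) (W m) y) \<longlonglongrightarrow> skew_field k b1 b2 u1 u2 w y"
  unfolding skew_field_def
  by (intro tendsto_diff tendsto_scaleR tendsto_add tendsto_mult tendsto_mpoly tendsto_mpoly_grad assms)

lemma skew_field_zero_imp_in_line:
  assumes "u1 \<noteq> 0 \<or> u2 \<noteq> 0 \<or> w \<noteq> 0"
    and zero: "\<And>y. y \<in> ball a r \<Longrightarrow> skew_field k b1 b2 u1 u2 w y = 0"
  shows "\<exists>L. is_line L \<and> (\<forall>y\<in>ball a r. pmap (mpoly k b1) (mpoly k b2) y \<in> L)"
proof (cases "w = 0")
  case True
  have "\<exists>\<kappa>. \<forall>y\<in>ball a r. u1 * mpoly k b2 y - u2 * mpoly k b1 y = \<kappa>"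
  proof (rule has_derivative_zero_constant[OF convex_ball])
    fix y assume "y \<in> ball a r"
    then have "(u1 *\<^sub>R mpoly_grad k b2 y - u2 *\<^sub>R mpoly_grad k b1 y) \<bullet> h = 0" for h
      using zero True by (simp add: skew_field_def)
    then have "(\<lambda>h. u1 * (mpoly_grad k b2 y \<bullet> h) - u2 * (mpoly_grad k b1 y \<bullet> h)) = (\<lambda>h. 0)"
      by (simp add: inner_diff_left)
    moreover have "((\<lambda>x. u1 * mpoly k b2 x - u2 * mpoly k b1 x) has_derivative
        (\<lambda>h. u1 * (mpoly_grad k b2 y \<bullet> h) - u2 * (mpoly_grad k b1 y \<bullet> h))) (at y)"
      by (intro has_derivative_diff has_derivative_mult_right has_derivative_mpoly)
    ultimately show "((\<lambda>x. u1 * mpoly k b2 x - u2 * mpoly k b1 x) has_derivative (\<lambda>h. 0))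
        (at y within ball a r)"
      by (simp add: has_derivative_at_withinI)
  qed
  then show ?thesis
    using assms(1) True by (auto intro: linear_relation_imp_pmap_in_line)
next
  case False
  define q1 where "q1 = (\<lambda>x. u1 / w + mpoly k b1 x)"
  define q2 where "q2 = (\<lambda>x. u2 / w + mpoly k b2 x)"
  have "skew_grad q1 q2 y = 0" if "y \<in> ball a r" for y
    using skew_grad_eq_skew_field[of q1 "u1 / w" k b1 0 q2 "u2 / w" b2 y]
      skew_field_scale[of k b1 b2 "1 / w" u1 u2 w y] zero[OF that] False
    by (simp add: q1_def q2_def)
  moreover have "poly_fun_deg_le k q1" "poly_fun_deg_le k q2"
    unfolding q1_def q2_def
    by (rule poly_fun_deg_le_add[OF poly_fun_deg_le_const poly_fun_deg_le_mpoly])+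
  ultimately obtain \<alpha>1 \<alpha>2 where "\<alpha>1 \<noteq> 0 \<or> \<alpha>2 \<noteq> 0" and "\<forall>y\<in>ball a r. \<alpha>1 * q2 y = \<alpha>2 * q1 y"
    using skew_grad_zero_imp_linear_relation[of k q1 q2 a r] by auto
  then show ?thesis
  proof (intro linear_relation_imp_pmap_in_line[where \<kappa> = "\<alpha>2 * (u1 / w) - \<alpha>1 * (u2 / w)"])
    fix y assume "y \<in> ball a r"
    then have "\<alpha>1 * q2 y = \<alpha>2 * q1 y" using \<open>\<forall>y\<in>ball a r. _\<close> by blast
    then show "\<alpha>1 * mpoly k b2 y - \<alpha>2 * mpoly k b1 y = \<alpha>2 * (u1 / w) - \<alpha>1 * (u2 / w)"
      by (simp add: q1_def q2_def algebra_simps)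
  qed
qed

section \<open>A uniform lower bound for the normalised skew gradient\<close>

definition far_from_lines :: "real \<Rightarrow> 'a set \<Rightarrow> ('a \<Rightarrow> real^2) \<Rightarrow> bool" where
  "far_from_lines \<epsilon> S f \<longleftrightarrow> (\<forall>L. is_line L \<longrightarrow> \<epsilon> \<le> (SUP x\<in>S. infdist (f x) L))"

lemma far_from_lines_translate:
  fixes c :: "'a::real_normed_vector"
  assumes "far_from_lines \<epsilon> (ball c r) f"
  shows "far_from_lines \<epsilon> (ball 0 r) (\<lambda>y. f (c + y))"
proof -
  have ball_eq: "ball c r = (+) c ` ball 0 r"
    using ball_translation[of c 0 r] by simp
  show ?thesis unfolding far_from_lines_def
  proof (intro allI impI)
    fix L :: "(real^2) set" assume "is_line L"
    then have "\<epsilon> \<le> (SUP x\<in>ball c r. infdist (f x) L)"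
      using assms by (simp add: far_from_lines_def)
    also have "\<dots> = (SUP y\<in>ball 0 r. infdist (f (c + y)) L)"
      unfolding ball_eq image_image ..
    finally show "\<epsilon> \<le> (SUP y\<in>ball 0 r. infdist (f (c + y)) L)" .
  qed
qed

lemma is_line_translation: "is_line L \<Longrightarrow> is_line ((+) v ` L)"
proof -
  assume "is_line L"
  then obtain a u where "u \<noteq> 0" and L: "L = {a + t *\<^sub>R u | t. True}"
    by (auto simp: is_line_def)
  then have "(+) v ` L = {(v + a) + t *\<^sub>R u | t. True}"
    by (auto simp: add.assoc)
  then show ?thesis using \<open>u \<noteq> 0\<close> by (auto simp: is_line_def)
qed

lemma norm_pmap_le: "norm (pmap f g x) \<le> \<bar>f x\<bar> + \<bar>g x\<bar>"
  using norm_le_l1_cart[of "pmap f g x"] by (simp add: pmap_def sum_2)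

lemma pmap_diff: "pmap f1 f2 x - pmap g1 g2 x = pmap (\<lambda>x. f1 x - g1 x) (\<lambda>x. f2 x - g2 x) x"
  by (simp add: pmap_def vec_eq_iff forall_2)

lemma far_from_lines_le_coeff_dist:
  fixes b1 :: "('n::finite \<Rightarrow> nat) \<Rightarrow> real"
  assumes far: "far_from_lines \<epsilon> (ball 0 1) (\<lambda>y. v + pmap (mpoly k c1) (mpoly k c2) y)"
    and "is_line L" and in_L: "\<forall>y\<in>ball 0 1. pmap (mpoly k b1) (mpoly k b2) y \<in> L"
  shows "\<epsilon> \<le> coeff_norm k (\<lambda>\<alpha>. c1 \<alpha> - b1 \<alpha>) + coeff_norm k (\<lambda>\<alpha>. c2 \<alpha> - b2 \<alpha>)"
proof -
  have "\<epsilon> \<le> (SUP y\<in>ball 0 1. infdist (v + pmap (mpoly k c1) (mpoly k c2) y) ((+) v ` L))"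
    using far is_line_translation[OF \<open>is_line L\<close>] by (simp add: far_from_lines_def)
  also have "\<dots> \<le> coeff_norm k (\<lambda>\<alpha>. c1 \<alpha> - b1 \<alpha>) + coeff_norm k (\<lambda>\<alpha>. c2 \<alpha> - b2 \<alpha>)"
  proof (rule cSUP_least)
    fix y :: "real^'n" assume y: "y \<in> ball 0 1"
    then have "v + pmap (mpoly k b1) (mpoly k b2) y \<in> (+) v ` L"
      using in_L by blast
    then have "infdist (v + pmap (mpoly k c1) (mpoly k c2) y) ((+) v ` L)
        \<le> dist (v + pmap (mpoly k c1) (mpoly k c2) y) (v + pmap (mpoly k b1) (mpoly k b2) y)"
      by (rule infdist_le)
    also have "\<dots> \<le> \<bar>mpoly k c1 y - mpoly k b1 y\<bar> + \<bar>mpoly k c2 y - mpoly k b2 y\<bar>"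
      unfolding dist_norm add_diff_cancel_left pmap_diff by (rule norm_pmap_le)
    also have "\<dots> \<le> coeff_norm k (\<lambda>\<alpha>. c1 \<alpha> - b1 \<alpha>) + coeff_norm k (\<lambda>\<alpha>. c2 \<alpha> - b2 \<alpha>)"
      using y unfolding mpoly_diff by (intro add_mono abs_mpoly_le_coeff_norm) simp_all
    finally show "infdist (v + pmap (mpoly k c1) (mpoly k c2) y) ((+) v ` L)
        \<le> coeff_norm k (\<lambda>\<alpha>. c1 \<alpha> - b1 \<alpha>) + coeff_norm k (\<lambda>\<alpha>. c2 \<alpha> - b2 \<alpha>)" .
  qed simp
  finally show ?thesis .
qed

lemma convergent_subseq_skew_data:
  fixes B1 B2 :: "nat \<Rightarrow> ('n::finite \<Rightarrow> nat) \<Rightarrow> real" and U1 U2 W :: "nat \<Rightarrow> real"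
  assumes "\<And>m. coeff_norm k (B1 m) \<le> C" "\<And>m. coeff_norm k (B2 m) \<le> C"
    and U_norm: "\<And>m. \<bar>U1 m\<bar> + \<bar>U2 m\<bar> + \<bar>W m\<bar> = 1"
  obtains r b1 b2 u1 u2 w where "strict_mono r"
    "\<forall>\<alpha>\<in>exponents k. (\<lambda>m. B1 (r m) \<alpha>) \<longlonglongrightarrow> b1 \<alpha>" "\<forall>\<alpha>\<in>exponents k. (\<lambda>m. B2 (r m) \<alpha>) \<longlonglongrightarrow> b2 \<alpha>"
    "(\<lambda>m. U1 (r m)) \<longlonglongrightarrow> u1" "(\<lambda>m. U2 (r m)) \<longlonglongrightarrow> u2" "(\<lambda>m. W (r m)) \<longlonglongrightarrow> w"
    "\<bar>u1\<bar> + \<bar>u2\<bar> + \<bar>w\<bar> = 1"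
proof -
  define X where "X m \<alpha> = (B1 m \<alpha>, B2 m \<alpha>, U1 m, U2 m, W m)" for m \<alpha>
  have "bounded (range (\<lambda>m. X m \<alpha>))" if "\<alpha> \<in> exponents k" for \<alpha>
  proof -
    have "norm (X m \<alpha>) \<le> 2 * C + 1" for m
    proof -
      have "\<bar>B1 m \<alpha>\<bar> \<le> C" "\<bar>B2 m \<alpha>\<bar> \<le> C"
        using abs_coeff_le_coeff_norm[OF that] assms(1,2) order_trans by blast+
      moreover have "norm (X m \<alpha>) \<le> \<bar>B1 m \<alpha>\<bar> + \<bar>B2 m \<alpha>\<bar> + (\<bar>U1 m\<bar> + \<bar>U2 m\<bar> + \<bar>W m\<bar>)"
        unfolding X_def by (smt (verit) norm_Pair_le real_norm_def)
      ultimately show ?thesis using U_norm[of m] by linarith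
    qed
    then show ?thesis by (auto simp: bounded_iff)
  qed
  then obtain r L where r: "strict_mono r"
    and L: "\<And>\<alpha>. \<alpha> \<in> exponents k \<Longrightarrow> (\<lambda>m. X (r m) \<alpha>) \<longlonglongrightarrow> L \<alpha>"
    using convergent_subseq_finite_family[OF finite_exponents] by blast
  \<comment> \<open>The scalar components do not depend on \<open>\<alpha>\<close>; read their limits off at \<open>\<alpha> = 0\<close>.\<close>
  define \<alpha>0 :: "'n \<Rightarrow> nat" where "\<alpha>0 = (\<lambda>_. 0)"
  have "\<alpha>0 \<in> exponents k" by (simp add: \<alpha>0_def exponents_def)
  define u1 u2 w where "u1 = fst (snd (snd (L \<alpha>0)))"
    and "u2 = fst (snd (snd (snd (L \<alpha>0))))" and "w = snd (snd (snd (snd (L \<alpha>0))))"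
  have U: "(\<lambda>m. U1 (r m)) \<longlonglongrightarrow> u1" "(\<lambda>m. U2 (r m)) \<longlonglongrightarrow> u2" "(\<lambda>m. W (r m)) \<longlonglongrightarrow> w"
    using tendsto_fst[OF tendsto_snd[OF tendsto_snd[OF L]]]
      tendsto_fst[OF tendsto_snd[OF tendsto_snd[OF tendsto_snd[OF L]]]]
      tendsto_snd[OF tendsto_snd[OF tendsto_snd[OF tendsto_snd[OF L]]]] \<open>\<alpha>0 \<in> exponents k\<close>
    by (simp_all add: X_def u1_def u2_def w_def)
  have "(\<lambda>m. \<bar>U1 (r m)\<bar> + \<bar>U2 (r m)\<bar> + \<bar>W (r m)\<bar>) \<longlonglongrightarrow> \<bar>u1\<bar> + \<bar>u2\<bar> + \<bar>w\<bar>"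
    by (intro tendsto_add tendsto_rabs U)
  then have "\<bar>u1\<bar> + \<bar>u2\<bar> + \<bar>w\<bar> = 1"
    using U_norm by (simp add: LIMSEQ_const_iff)
  moreover have "\<forall>\<alpha>\<in>exponents k. (\<lambda>m. B1 (r m) \<alpha>) \<longlonglongrightarrow> fst (L \<alpha>)"
    and "\<forall>\<alpha>\<in>exponents k. (\<lambda>m. B2 (r m) \<alpha>) \<longlonglongrightarrow> fst (snd (L \<alpha>))"
    using tendsto_fst[OF L] tendsto_fst[OF tendsto_snd[OF L]] by (simp_all add: X_def)
  ultimately show ?thesis by (intro that[OF r _ _ U])
qed

lemma skew_field_tendsto_0_imp_near_line:
  fixes B1 B2 :: "nat \<Rightarrow> ('n::finite \<Rightarrow> nat) \<Rightarrow> real" and U1 U2 W :: "nat \<Rightarrow> real"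
  assumes "\<And>m. coeff_norm k (B1 m) \<le> C" "\<And>m. coeff_norm k (B2 m) \<le> C"
    and "\<And>m. \<bar>U1 m\<bar> + \<bar>U2 m\<bar> + \<bar>W m\<bar> = 1"
    and lim0: "\<And>y. y \<in> ball 0 1 \<Longrightarrow> (\<lambda>m. skew_field k (B1 m) (B2 m) (U1 m) (U2 m) (W m) y) \<longlonglongrightarrow> 0"
  obtains r b1 b2 L where "strict_mono r" "is_line L"
    "\<forall>y\<in>ball 0 1. pmap (mpoly k b1) (mpoly k b2) y \<in> L"
    "(\<lambda>m. coeff_norm k (\<lambda>\<alpha>. B1 (r m) \<alpha> - b1 \<alpha>) + coeff_norm k (\<lambda>\<alpha>. B2 (r m) \<alpha> - b2 \<alpha>)) \<longlonglongrightarrow> 0"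
proof -
  obtain r b1 b2 u1 u2 w where r: "strict_mono r"
    and b: "\<forall>\<alpha>\<in>exponents k. (\<lambda>m. B1 (r m) \<alpha>) \<longlonglongrightarrow> b1 \<alpha>" "\<forall>\<alpha>\<in>exponents k. (\<lambda>m. B2 (r m) \<alpha>) \<longlonglongrightarrow> b2 \<alpha>"
    and u: "(\<lambda>m. U1 (r m)) \<longlonglongrightarrow> u1" "(\<lambda>m. U2 (r m)) \<longlonglongrightarrow> u2" "(\<lambda>m. W (r m)) \<longlonglongrightarrow> w"
    and "\<bar>u1\<bar> + \<bar>u2\<bar> + \<bar>w\<bar> = 1"
    by (rule convergent_subseq_skew_data[OF assms(1-3)])
  then have nz: "u1 \<noteq> 0 \<or> u2 \<noteq> 0 \<or> w \<noteq> 0" by auto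
  have "skew_field k b1 b2 u1 u2 w y = 0" if "y \<in> ball 0 1" for y
  proof -
    have "(\<lambda>m. skew_field k (B1 (r m)) (B2 (r m)) (U1 (r m)) (U2 (r m)) (W (r m)) y) \<longlonglongrightarrow> 0"
      using LIMSEQ_subseq_LIMSEQ[OF lim0[OF that] r] by (simp add: comp_def)
    moreover have "(\<lambda>m. skew_field k (B1 (r m)) (B2 (r m)) (U1 (r m)) (U2 (r m)) (W (r m)) y)
        \<longlonglongrightarrow> skew_field k b1 b2 u1 u2 w y"
      by (rule tendsto_skew_field[OF b u])
    ultimately show ?thesis using LIMSEQ_unique by blast
  qed
  then obtain L where "is_line L" "\<forall>y\<in>ball 0 1. pmap (mpoly k b1) (mpoly k b2) y \<in> L"
    using skew_field_zero_imp_in_line[OF nz] by blast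
  moreover have "(\<lambda>m. coeff_norm k (\<lambda>\<alpha>. B1 (r m) \<alpha> - b1 \<alpha>) + coeff_norm k (\<lambda>\<alpha>. B2 (r m) \<alpha> - b2 \<alpha>))
      \<longlonglongrightarrow> 0"
    using tendsto_add[OF tendsto_coeff_norm_diff[OF b(1)] tendsto_coeff_norm_diff[OF b(2)]] by simp
  ultimately show ?thesis by (rule that[OF r])
qed

lemma skew_field_lower_bound:
  assumes "0 < \<epsilon>"
  shows "\<exists>\<gamma>>0. \<forall>(b1 :: ('n::finite \<Rightarrow> nat) \<Rightarrow> real) b2 u1 u2 w v.
    coeff_norm k b1 \<le> C \<and> coeff_norm k b2 \<le> C \<and> \<bar>u1\<bar> + \<bar>u2\<bar> + \<bar>w\<bar> = 1 \<and>
    far_from_lines \<epsilon> (ball 0 1) (\<lambda>y. v + pmap (mpoly k b1) (mpoly k b2) y) \<longrightarrow>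
    (\<exists>y\<in>ball 0 1. \<gamma> \<le> norm (skew_field k b1 b2 u1 u2 w y))"
proof (rule ccontr)
  assume "\<not> ?thesis"
  then have "\<forall>\<gamma>>0. \<exists>(b1 :: ('n \<Rightarrow> nat) \<Rightarrow> real) b2 u1 u2 w v.
    coeff_norm k b1 \<le> C \<and> coeff_norm k b2 \<le> C \<and> \<bar>u1\<bar> + \<bar>u2\<bar> + \<bar>w\<bar> = 1 \<and>
    far_from_lines \<epsilon> (ball 0 1) (\<lambda>y. v + pmap (mpoly k b1) (mpoly k b2) y) \<and>
    (\<forall>y\<in>ball 0 1. norm (skew_field k b1 b2 u1 u2 w y) < \<gamma>)"
    by (simp add: not_le)
  then have "\<exists>(b1 :: ('n \<Rightarrow> nat) \<Rightarrow> real) b2 u1 u2 w v.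
    coeff_norm k b1 \<le> C \<and> coeff_norm k b2 \<le> C \<and> \<bar>u1\<bar> + \<bar>u2\<bar> + \<bar>w\<bar> = 1 \<and>
    far_from_lines \<epsilon> (ball 0 1) (\<lambda>y. v + pmap (mpoly k b1) (mpoly k b2) y) \<and>
    (\<forall>y\<in>ball 0 1. norm (skew_field k b1 b2 u1 u2 w y) < inverse (real (Suc m)))" for m
    by simp
  then obtain B1 B2 :: "nat \<Rightarrow> ('n \<Rightarrow> nat) \<Rightarrow> real" and U1 U2 W V where
    B_norm: "\<And>m. coeff_norm k (B1 m) \<le> C" "\<And>m. coeff_norm k (B2 m) \<le> C"
    and U_norm: "\<And>m. \<bar>U1 m\<bar> + \<bar>U2 m\<bar> + \<bar>W m\<bar> = 1"
    and far: "\<And>m. far_from_lines \<epsilon> (ball 0 1) (\<lambda>y. V m + pmap (mpoly k (B1 m)) (mpoly k (B2 m)) y)"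
    and small: "\<And>m y. y \<in> ball 0 1 \<Longrightarrow>
      norm (skew_field k (B1 m) (B2 m) (U1 m) (U2 m) (W m) y) < inverse (real (Suc m))"
    by metis
  have "(\<lambda>m. skew_field k (B1 m) (B2 m) (U1 m) (U2 m) (W m) y) \<longlonglongrightarrow> 0" if "y \<in> ball 0 1" for y
    using small[OF that]
    by (intro Lim_null_comparison[OF always_eventually LIMSEQ_inverse_real_of_nat]) (simp add: less_imp_le)
  then obtain r b1 b2 L where "is_line L" and in_L: "\<forall>y\<in>ball 0 1. pmap (mpoly k b1) (mpoly k b2) y \<in> L"
    and lim: "(\<lambda>m. coeff_norm k (\<lambda>\<alpha>. B1 (r m) \<alpha> - b1 \<alpha>) + coeff_norm k (\<lambda>\<alpha>. B2 (r m) \<alpha> - b2 \<alpha>))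
      \<longlonglongrightarrow> 0"
    by (rule skew_field_tendsto_0_imp_near_line[OF B_norm U_norm])
  have "\<epsilon> \<le> coeff_norm k (\<lambda>\<alpha>. B1 (r m) \<alpha> - b1 \<alpha>) + coeff_norm k (\<lambda>\<alpha>. B2 (r m) \<alpha> - b2 \<alpha>)" for m
    by (rule far_from_lines_le_coeff_dist[OF far \<open>is_line L\<close> in_L])
  then have "\<epsilon> \<le> 0"
    by (intro LIMSEQ_le_const[OF lim]) auto
  then show False using assms by simp
qed

definition admissible :: "nat \<Rightarrow> real^'n::finite \<Rightarrow> (real^'n \<Rightarrow> real) \<Rightarrow> (real^'n \<Rightarrow> real) \<Rightarrow> bool" where
  "admissible l c p1 p2 \<longleftrightarrow> poly_fun_deg_le l p1 \<and> poly_fun_deg_le l p2 \<and>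
     (\<forall>x\<in>ball c 1. \<forall>y\<in>ball c 1. norm (pmap p1 p2 x - pmap p1 p2 y) \<le> 2) \<and>
     far_from_lines (1/8) (ball c 1) (pmap p1 p2)"

lemma admissible_oscillation:
  assumes "admissible l c p1 p2" "x \<in> ball c 1"
  shows "\<bar>p1 x - p1 c\<bar> \<le> 2" "\<bar>p2 x - p2 c\<bar> \<le> 2"
proof -
  have "norm (pmap p1 p2 x - pmap p1 p2 c) \<le> 2"
    using assms by (simp add: admissible_def)
  then show "\<bar>p1 x - p1 c\<bar> \<le> 2" "\<bar>p2 x - p2 c\<bar> \<le> 2"
    using component_le_norm_cart[of "pmap p1 p2 x - pmap p1 p2 c" 1]
      component_le_norm_cart[of "pmap p1 p2 x - pmap p1 p2 c" 2]
    by (simp_all add: pmap_def)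
qed

lemma admissible_normal_form:
  "\<exists>C. \<forall>(c :: real^'n::finite) p1 p2. admissible l c p1 p2 \<longrightarrow>
    (\<exists>b1 b2. coeff_norm l b1 \<le> C \<and> coeff_norm l b2 \<le> C \<and>
      (\<forall>x. p1 x = p1 c + mpoly l b1 (x - c)) \<and> (\<forall>x. p2 x = p2 c + mpoly l b2 (x - c)))"
proof -
  obtain C where C: "\<forall>f (c :: real^'n). poly_fun_deg_le l f \<and> (\<forall>x\<in>ball c 1. \<bar>f x - f c\<bar> \<le> 2) \<longrightarrow>
      (\<exists>b. coeff_norm l b \<le> C \<and> (\<forall>x. f x = f c + mpoly l b (x - c)))"
    using poly_fun_deg_le_normal_form by blast
  have "(\<exists>b1. coeff_norm l b1 \<le> C \<and> (\<forall>x. p1 x = p1 c + mpoly l b1 (x - c))) \<and>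
      (\<exists>b2. coeff_norm l b2 \<le> C \<and> (\<forall>x. p2 x = p2 c + mpoly l b2 (x - c)))"
    if "admissible l c p1 p2" for c :: "real^'n" and p1 p2
  proof -
    have "poly_fun_deg_le l p1" "poly_fun_deg_le l p2"
      using that by (simp_all add: admissible_def)
    then show ?thesis using C admissible_oscillation[OF that] by blast
  qed
  then show ?thesis by blast
qed

lemma admissible_grad_bound:
  "\<exists>M\<ge>1. \<forall>(c :: real^'n::finite) p1 p2. admissible l c p1 p2 \<longrightarrow>
    (\<forall>x\<in>ball c 1. norm (grad p1 x) \<le> M \<and> norm (grad p2 x) \<le> M)"
proof -
  obtain C where C: "\<forall>(c :: real^'n) p1 p2. admissible l c p1 p2 \<longrightarrow>
    (\<exists>b1 b2. coeff_norm l b1 \<le> C \<and> coeff_norm l b2 \<le> C \<and>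
      (\<forall>x. p1 x = p1 c + mpoly l b1 (x - c)) \<and> (\<forall>x. p2 x = p2 c + mpoly l b2 (x - c)))"
    using admissible_normal_form by blast
  have grad_le: "norm (grad p x) \<le> max 1 (C * real l)"
    if "coeff_norm l b \<le> C" "\<forall>x. p x = p c + mpoly l b (x - c)" "x \<in> ball c 1"
    for p b and c x :: "real^'n"
  proof -
    have "p = (\<lambda>x. p c + mpoly l b (x - c))"
      by (rule ext) (rule that(2)[rule_format])
    then have "grad p x = mpoly_grad l b (x - c)"
      by (subst \<open>p = _\<close>) (rule grad_shifted_mpoly)
    moreover have "norm (x - c) \<le> 1"
      using that(3) by (simp add: dist_norm norm_minus_commute)
    ultimately have "norm (grad p x) \<le> coeff_norm l b * real l"
      by (simp add: norm_mpoly_grad_le)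
    also have "\<dots> \<le> C * real l"
      using that(1) by (simp add: mult_right_mono)
    finally show ?thesis by linarith
  qed
  show ?thesis
  proof (intro exI[of _ "max 1 (C * real l)"] conjI max.cobounded1 allI impI ballI)
    fix c :: "real^'n" and p1 p2 x assume "admissible l c p1 p2" "x \<in> ball c 1"
    moreover obtain b1 b2 where "coeff_norm l b1 \<le> C" "coeff_norm l b2 \<le> C"
      "\<forall>x. p1 x = p1 c + mpoly l b1 (x - c)" "\<forall>x. p2 x = p2 c + mpoly l b2 (x - c)"
      using C \<open>admissible l c p1 p2\<close> by blast
    ultimately show "norm (grad p1 x) \<le> max 1 (C * real l)" "norm (grad p2 x) \<le> max 1 (C * real l)"
      using grad_le by blast+
  qed
qed

lemma admissible_far_from_lines_at_0:
  assumes "admissible l c p1 p2"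
    and p1: "\<And>x. p1 x = p1 c + mpoly k b1 (x - c)" and p2: "\<And>x. p2 x = p2 c + mpoly k b2 (x - c)"
  shows "far_from_lines (1/8) (ball 0 1) (\<lambda>y. pmap p1 p2 c + pmap (mpoly k b1) (mpoly k b2) y)"
proof -
  have "pmap p1 p2 (c + y) = pmap p1 p2 c + pmap (mpoly k b1) (mpoly k b2) y" for y
    using p1[of "c + y"] p2[of "c + y"] by (simp add: pmap_def vec_eq_iff forall_2)
  then show ?thesis
    using far_from_lines_translate[of "1/8" c 1 "pmap p1 p2"] assms(1) by (simp add: admissible_def)
qed

lemma admissible_skew_grad_lower_bound:
  "\<exists>\<gamma>>0. \<forall>(c :: real^'n::finite) p1 p2. admissible l c p1 p2 \<longrightarrow>
    (\<exists>x\<in>ball c 1. \<gamma> * (1 + \<bar>p1 c\<bar> + \<bar>p2 c\<bar>) \<le> norm (skew_grad p1 p2 x))"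
proof -
  obtain C where C: "\<forall>(c :: real^'n) p1 p2. admissible l c p1 p2 \<longrightarrow>
    (\<exists>b1 b2. coeff_norm l b1 \<le> C \<and> coeff_norm l b2 \<le> C \<and>
      (\<forall>x. p1 x = p1 c + mpoly l b1 (x - c)) \<and> (\<forall>x. p2 x = p2 c + mpoly l b2 (x - c)))"
    using admissible_normal_form by blast
  obtain \<gamma> where "0 < \<gamma>" and \<gamma>: "\<forall>(b1 :: ('n \<Rightarrow> nat) \<Rightarrow> real) b2 u1 u2 w v.
    coeff_norm l b1 \<le> C \<and> coeff_norm l b2 \<le> C \<and> \<bar>u1\<bar> + \<bar>u2\<bar> + \<bar>w\<bar> = 1 \<and>
    far_from_lines (1/8) (ball 0 1) (\<lambda>y. v + pmap (mpoly l b1) (mpoly l b2) y) \<longrightarrow>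
    (\<exists>y\<in>ball 0 1. \<gamma> \<le> norm (skew_field l b1 b2 u1 u2 w y))"
    using skew_field_lower_bound[of "1/8" l C] by auto
  have "\<exists>x\<in>ball c 1. \<gamma> * (1 + \<bar>p1 c\<bar> + \<bar>p2 c\<bar>) \<le> norm (skew_grad p1 p2 x)"
    if adm: "admissible l c p1 p2" for c :: "real^'n" and p1 p2
  proof -
    obtain b1 b2 where b: "coeff_norm l b1 \<le> C" "coeff_norm l b2 \<le> C"
      and p1: "\<And>x. p1 x = p1 c + mpoly l b1 (x - c)" and p2: "\<And>x. p2 x = p2 c + mpoly l b2 (x - c)"
      using C adm by blast
    define D where "D = 1 + \<bar>p1 c\<bar> + \<bar>p2 c\<bar>"
    have "0 < D" by (simp add: D_def add_pos_nonneg)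
    have "\<bar>p1 c / D\<bar> + \<bar>p2 c / D\<bar> + \<bar>1 / D\<bar> = 1"
      using \<open>0 < D\<close> by (simp add: D_def abs_divide add_divide_distrib[symmetric])
    moreover have "far_from_lines (1/8) (ball 0 1)
        (\<lambda>y. pmap p1 p2 c + pmap (mpoly l b1) (mpoly l b2) y)"
      by (rule admissible_far_from_lines_at_0[OF adm p1 p2])
    ultimately obtain y where y: "y \<in> ball 0 1"
      and "\<gamma> \<le> norm (skew_field l b1 b2 (p1 c / D) (p2 c / D) (1 / D) y)"
      using \<gamma> b by blast
    moreover have "skew_field l b1 b2 (p1 c / D) (p2 c / D) (1 / D) y = (1 / D) *\<^sub>R skew_grad p1 p2 (c + y)"
      using skew_field_scale[of l b1 b2 "1 / D" "p1 c" "p2 c" 1 y]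
        skew_grad_eq_skew_field[of p1 "p1 c" l b1 c p2 "p2 c" b2 "c + y", OF p1 p2]
      by simp
    ultimately have "\<gamma> * D \<le> norm (skew_grad p1 p2 (c + y))"
      using \<open>0 < D\<close> by (simp add: pos_le_divide_eq)
    moreover have "c + y \<in> ball c 1" using y by (simp add: dist_norm)
    ultimately show ?thesis unfolding D_def by blast
  qed
  then show ?thesis using \<open>0 < \<gamma>\<close> by blast
qed

lemma admissible_SUP_norm_pmap_le:
  assumes "admissible l c p1 p2"
  shows "(SUP x\<in>ball c 1. norm (pmap p1 p2 x)) \<le> \<bar>p1 c\<bar> + \<bar>p2 c\<bar> + 4"
proof (rule cSUP_least)
  fix x assume "x \<in> ball c 1"
  then show "norm (pmap p1 p2 x) \<le> \<bar>p1 c\<bar> + \<bar>p2 c\<bar> + 4"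
    using norm_pmap_le[of p1 p2 x] admissible_oscillation[OF assms] by fastforce
qed simp

lemma admissible_bdd_above_skew_grad:
  assumes adm: "admissible l c p1 p2"
    and M: "\<forall>x\<in>ball c 1. norm (grad p1 x) \<le> M \<and> norm (grad p2 x) \<le> M"
  shows "bdd_above ((\<lambda>x. norm (skew_grad p1 p2 x)) ` ball c 1)"
proof (rule bdd_aboveI2)
  fix x assume x: "x \<in> ball c 1"
  have "norm (skew_grad p1 p2 x) \<le> \<bar>p1 x\<bar> * norm (grad p2 x) + \<bar>p2 x\<bar> * norm (grad p1 x)"
    unfolding skew_grad_def by (metis norm_scaleR norm_triangle_ineq4)
  also have "\<dots> \<le> (\<bar>p1 c\<bar> + 2) * M + (\<bar>p2 c\<bar> + 2) * M"
    using M x admissible_oscillation[OF adm x] by (intro add_mono mult_mono) auto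
  finally show "norm (skew_grad p1 p2 x) \<le> (\<bar>p1 c\<bar> + 2) * M + (\<bar>p2 c\<bar> + 2) * M" .
qed

lemma admissible_SUP_skew_grad_ge:
  "\<exists>\<gamma>. 0 < \<gamma> \<and> \<gamma> < 1 \<and> (\<forall>(c :: real^'n::finite) p1 p2. admissible l c p1 p2 \<longrightarrow>
    \<gamma> * (1 + (SUP x\<in>ball c 1. norm (pmap p1 p2 x))) \<le> (SUP x\<in>ball c 1. norm (skew_grad p1 p2 x)))"
proof -
  obtain \<gamma>0 where "0 < \<gamma>0" and \<gamma>0: "\<forall>(c :: real^'n) p1 p2. admissible l c p1 p2 \<longrightarrow>
    (\<exists>x\<in>ball c 1. \<gamma>0 * (1 + \<bar>p1 c\<bar> + \<bar>p2 c\<bar>) \<le> norm (skew_grad p1 p2 x))"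
    using admissible_skew_grad_lower_bound by blast
  obtain M where M: "\<forall>(c :: real^'n) p1 p2. admissible l c p1 p2 \<longrightarrow>
    (\<forall>x\<in>ball c 1. norm (grad p1 x) \<le> M \<and> norm (grad p2 x) \<le> M)"
    using admissible_grad_bound by blast
  define \<gamma> where "\<gamma> = min \<gamma>0 1 / 5"
  have "\<gamma> * (1 + (SUP x\<in>ball c 1. norm (pmap p1 p2 x))) \<le> (SUP x\<in>ball c 1. norm (skew_grad p1 p2 x))"
    if adm: "admissible l c p1 p2" for c :: "real^'n" and p1 p2
  proof -
    define D where "D = 1 + \<bar>p1 c\<bar> + \<bar>p2 c\<bar>"
    obtain x0 where "x0 \<in> ball c 1" and x0: "\<gamma>0 * D \<le> norm (skew_grad p1 p2 x0)"
      using \<gamma>0 adm unfolding D_def by blast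
    have "\<gamma> * (1 + (SUP x\<in>ball c 1. norm (pmap p1 p2 x))) \<le> min \<gamma>0 1 * D"
      using admissible_SUP_norm_pmap_le[OF adm] \<open>0 < \<gamma>0\<close> by (simp add: \<gamma>_def D_def)
    also have "\<dots> \<le> \<gamma>0 * D"
      by (simp add: D_def mult_right_mono)
    also note x0
    also have "norm (skew_grad p1 p2 x0) \<le> (SUP x\<in>ball c 1. norm (skew_grad p1 p2 x))"
    proof (rule cSUP_upper[OF \<open>x0 \<in> ball c 1\<close>])
      show "bdd_above ((\<lambda>x. norm (skew_grad p1 p2 x)) ` ball c 1)"
        using M adm by (intro admissible_bdd_above_skew_grad[OF adm]) blast
    qed
    finally show ?thesis .
  qed
  moreover have "0 < \<gamma>" "\<gamma> < 1"
    using \<open>0 < \<gamma>0\<close> by (auto simp: \<gamma>_def)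
  ultimately show ?thesis by blast
qed

theorem lemma4p3:
  fixes l :: nat
  assumes "l \<ge> 1"
  shows "\<exists>\<gamma> M :: real. 0 < \<gamma> \<and> \<gamma> < 1 \<and> M \<ge> 1 \<and>
    (\<forall>(c :: real^'n) p1 p2.
       poly_fun_deg_le l p1 \<and> poly_fun_deg_le l p2 \<and>
       (\<forall>x\<in>ball c 1. \<forall>y\<in>ball c 1. norm (pmap p1 p2 x - pmap p1 p2 y) \<le> 2) \<and>
       (\<forall>L. is_line L \<longrightarrow> (SUP x\<in>ball c 1. infdist (pmap p1 p2 x) L) \<ge> 1/8)
     \<longrightarrow>
       (SUP x\<in>ball c 1. norm (skew_grad p1 p2 x))
          \<ge> \<gamma> * (1 + (SUP x\<in>ball c 1. norm (pmap p1 p2 x))) \<and>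
       (\<forall>x\<in>ball c 1. \<forall>i\<in>{p1, p2}. norm (grad i x) \<le> M))"
proof -
  obtain \<gamma> where \<gamma>: "0 < \<gamma>" "\<gamma> < 1" and skew: "\<forall>(c :: real^'n) p1 p2. admissible l c p1 p2 \<longrightarrow>
    \<gamma> * (1 + (SUP x\<in>ball c 1. norm (pmap p1 p2 x))) \<le> (SUP x\<in>ball c 1. norm (skew_grad p1 p2 x))"
    using admissible_SUP_skew_grad_ge by blast
  obtain M where "M \<ge> 1" and grad: "\<forall>(c :: real^'n) p1 p2. admissible l c p1 p2 \<longrightarrow>
    (\<forall>x\<in>ball c 1. norm (grad p1 x) \<le> M \<and> norm (grad p2 x) \<le> M)"
    using admissible_grad_bound by blast
  have "(SUP x\<in>ball c 1. norm (skew_grad p1 p2 x)) \<ge> \<gamma> * (1 + (SUP x\<in>ball c 1. norm (pmap p1 p2 x))) \<and>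
      (\<forall>x\<in>ball c 1. \<forall>i\<in>{p1, p2}. norm (grad i x) \<le> M)"
    if "admissible l c p1 p2" for c :: "real^'n" and p1 p2
    using skew grad that by auto
  then show ?thesis
    using \<gamma> \<open>M \<ge> 1\<close> unfolding admissible_def far_from_lines_def by blast
qed

end
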